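(* For all $\eta,\varepsilon>0$ and $c\in\mathbb N$ there exist $\eta'>0$ and $n_0$ such that the following holds for all $n\ge n_0$. Let $H$ be a $3$-graph of order $n$. Let $V_1,\dots,V_d$ be disjoint subsets of $V(H)$ with $2\le d\le4$, each $(c,\eta)$-closed in $H$. Let $a_1,\dots,a_d$ be non-negative integers with $a_1\ge1$ and $\sum_i a_i=4$. Suppose there are at least $\varepsilon n^4$ copies $F$ of $K_4^-$ in $H$ with $|V(F)\cap V_i|=a_i$ for all $i\in[d]$, and at least $\varepsilon n^4$ copies $F'$ of $K_4^-$ in $H$ with $|V(F')\cap V_1|=a_1-1$, $|V(F')\cap V_2|=a_2+1$ and $|V(F')\cap V_j|=a_j$ for all $3\le j\le d$. Then $V_1\cup V_2$ is $(5c+1,\eta')$-closed in $H$.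
   Context: $K_4^-$ is the $3$-graph with $4$ vertices and $3$ edges; copies are counted as $4$-subsets of $V(H)$ spanning a (not necessarily induced) copy. A $K_4^-$-factor is a set of vertex-disjoint copies covering all vertices. Let $H$ be a $3$-graph of order $n$. For $c\in\mathbb N$, a set $S\subseteq V(H)$ is an $(x,y)$-connector of length $c$ if $S\cap\{x,y\}=\emptyset$, $|S|=4c-1$, and both $H[S\cup\{x\}]$ and $H[S\cup\{y\}]$ contain $K_4^-$-factors. Vertices $x,y$ are $(c,\eta)$-close if there are at least $\eta n^{4c-1}$ $(x,y)$-connectors of length $c$ in $H$. A set $U\subseteq V(H)$ is $(c,\eta)$-closed in $H$ if every two vertices of $U$ are $(c,\eta)$-close in $H$. *)

theory Defs
  imports Complex_Main "HOL-Library.Disjoint_Sets"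
begin

definition three_graph :: "'a set \<Rightarrow> 'a set set \<Rightarrow> bool" where
  "three_graph VH EH \<longleftrightarrow> finite VH \<and> (\<forall>e\<in>EH. e \<subseteq> VH \<and> card e = 3)"

text \<open>A 4-subset S of VH spans a (not necessarily induced) copy of K4^-:
  at least 3 of its 3-subsets are edges.\<close>
definition K4m_copy :: "'a set \<Rightarrow> 'a set set \<Rightarrow> 'a set \<Rightarrow> bool" where
  "K4m_copy VH EH S \<longleftrightarrow> S \<subseteq> VH \<and> card S = 4 \<and> card {e\<in>EH. e \<subseteq> S} \<ge> 3"

definition has_K4m_factor :: "'a set \<Rightarrow> 'a set set \<Rightarrow> 'a set \<Rightarrow> bool" where
  "has_K4m_factor VH EH W \<longleftrightarrow>
     (\<exists>P. disjoint P \<and> \<Union>P = W \<and> (\<forall>F\<in>P. K4m_copy VH EH F))"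

definition connector :: "'a set \<Rightarrow> 'a set set \<Rightarrow> nat \<Rightarrow> 'a \<Rightarrow> 'a \<Rightarrow> 'a set \<Rightarrow> bool" where
  "connector VH EH c x y S \<longleftrightarrow> S \<subseteq> VH \<and> x \<notin> S \<and> y \<notin> S \<and> card S = 4 * c - 1 \<and>
     has_K4m_factor VH EH (insert x S) \<and> has_K4m_factor VH EH (insert y S)"

definition close :: "'a set \<Rightarrow> 'a set set \<Rightarrow> nat \<Rightarrow> real \<Rightarrow> 'a \<Rightarrow> 'a \<Rightarrow> bool" where
  "close VH EH c \<eta> x y \<longleftrightarrow>
     real (card {S. connector VH EH c x y S}) \<ge> \<eta> * real (card VH) ^ (4 * c - 1)"

definition closed :: "'a set \<Rightarrow> 'a set set \<Rightarrow> nat \<Rightarrow> real \<Rightarrow> 'a set \<Rightarrow> bool" where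
  "closed VH EH c \<eta> U \<longleftrightarrow> (\<forall>x\<in>U. \<forall>y\<in>U. x \<noteq> y \<longrightarrow> close VH EH c \<eta> x y)"

end

theory Submission
  imports Defs
begin

(*
  Let x \<in> V i and y \<in> V j with i, j \<in> {1, 2}.  Take disjoint copies F and G of K4^- from the two
  dense families, with profiles such that removing a vertex u \<in> F \<inter> V i from F and a vertex
  w \<in> G \<inter> V j from G leaves equal profiles.  Pairing x with u, w with y and F - {u} with
  G - {w} inside common parts gives five pairs, each inside a closed part.  For disjoint
  connectors of these pairs with union D, the set F \<union> G \<union> D is an (x, y)-connector of length
  5c + 1: adding x it splits into F and the connectors completed by x and G, adding y into G
  and the connectors completed by y and F.  There are order n^8 pairs (F, G) and order
  n^(5(4c-1)) sets D, and every connector arises boundedly often.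
*)

lemma has_K4m_factor_empty: "has_K4m_factor VH EH {}"
  unfolding has_K4m_factor_def by (rule exI[of _ "{}"]) (simp add: disjoint_def)

lemma has_K4m_factor_copy: "K4m_copy VH EH F \<Longrightarrow> has_K4m_factor VH EH F"
  unfolding has_K4m_factor_def by (rule exI[of _ "{F}"]) (simp add: disjoint_def)

lemma has_K4m_factor_Un:
  assumes "has_K4m_factor VH EH A" and "has_K4m_factor VH EH B" and "A \<inter> B = {}"
  shows "has_K4m_factor VH EH (A \<union> B)"
proof -
  obtain P Q where "disjoint P" "\<Union>P = A" "\<forall>F\<in>P. K4m_copy VH EH F"
    and "disjoint Q" "\<Union>Q = B" "\<forall>F\<in>Q. K4m_copy VH EH F"
    using assms(1,2) unfolding has_K4m_factor_def by blast
  then show ?thesis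
    using assms(3) unfolding has_K4m_factor_def by (intro exI[of _ "P \<union> Q"]) (auto intro: disjoint_union)
qed

lemma K4m_copy_D:
  assumes "K4m_copy VH EH F"
  shows "F \<subseteq> VH" and "card F = 4" and "finite F"
proof -
  show "F \<subseteq> VH" "card F = 4"
    using assms by (auto simp: K4m_copy_def)
  then show "finite F"
    by (intro card_ge_0_finite) simp
qed

lemma card_subsets_containing_le:
  assumes "finite V"
  shows "card {C. C \<subseteq> V \<and> card C = k \<and> v \<in> C} \<le> card V ^ (k - 1)"
proof -
  let ?S = "{C. C \<subseteq> V \<and> card C = k \<and> v \<in> C}"
  have "inj_on (\<lambda>C. C - {v}) ?S"
    by (rule inj_onI) blast
  moreover have "(\<lambda>C. C - {v}) ` ?S \<subseteq> {B. B \<subseteq> V \<and> card B = k - 1}"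
    using assms by (auto dest: finite_subset)
  ultimately have "card ?S \<le> card {B. B \<subseteq> V \<and> card B = k - 1}"
    using assms by (intro card_inj_on_le) auto
  also have "\<dots> = card V choose (k - 1)"
    using assms by (rule n_subsets)
  also have "\<dots> \<le> card V ^ (k - 1)"
    by (cases "k - 1 \<le> card V") (auto simp: binomial_le_pow binomial_eq_0)
  finally show ?thesis .
qed

lemma card_avoiding_ge:
  assumes fin: "finite V" and \<CC>: "\<CC> \<subseteq> {C. C \<subseteq> V \<and> card C = k}" and "finite W"
  shows "real (card \<CC>) - real (card W) * real (card V) ^ (k - 1) \<le> real (card {C\<in>\<CC>. C \<inter> W = {}})"
proof -
  have "finite \<CC>"
    using \<CC> fin by (metis (no_types, lifting) Collect_mono finite_Collect_subsets rev_finite_subset)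
  then have "card \<CC> = card {C\<in>\<CC>. C \<inter> W = {}} + card {C\<in>\<CC>. C \<inter> W \<noteq> {}}"
    by (subst card_Un_disjoint[symmetric]) (auto intro: arg_cong[where f = card])
  moreover have "card {C\<in>\<CC>. C \<inter> W \<noteq> {}} \<le> card W * card V ^ (k - 1)"
  proof -
    have "card {C\<in>\<CC>. C \<inter> W \<noteq> {}} \<le> card (\<Union>v\<in>W. {C. C \<subseteq> V \<and> card C = k \<and> v \<in> C})"
      using \<CC> fin \<open>finite W\<close> by (intro card_mono) auto
    also have "\<dots> \<le> (\<Sum>v\<in>W. card {C. C \<subseteq> V \<and> card C = k \<and> v \<in> C})"
      using \<open>finite W\<close> by (rule card_UN_le)
    also have "\<dots> \<le> (\<Sum>v\<in>W. card V ^ (k - 1))"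
      using fin by (intro sum_mono card_subsets_containing_le)
    finally show ?thesis by simp
  qed
  then have "real (card {C\<in>\<CC>. C \<inter> W \<noteq> {}}) \<le> real (card W) * real (card V) ^ (k - 1)"
    by (metis of_nat_le_iff of_nat_mult of_nat_power)
  ultimately show ?thesis by simp
qed

text \<open>Each union of a k-set and a disjoint m-set arises from at most (k + m) choose k such pairs.\<close>
lemma double_count_disjoint_unions:
  fixes \<AA> :: "'a set set" and \<BB> :: "'a set \<Rightarrow> 'a set set"
  assumes "finite \<AA>"
    and \<AA>: "\<And>A. A \<in> \<AA> \<Longrightarrow> finite A \<and> card A = k"
    and "\<And>A. A \<in> \<AA> \<Longrightarrow> finite (\<BB> A)"
    and \<BB>: "\<And>A B. A \<in> \<AA> \<Longrightarrow> B \<in> \<BB> A \<Longrightarrow> finite B \<and> card B = m \<and> A \<inter> B = {}"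
    and \<beta>: "\<And>A. A \<in> \<AA> \<Longrightarrow> \<beta> \<le> real (card (\<BB> A))"
  shows "real (card \<AA>) * \<beta> \<le> real (card {A \<union> B | A B. A \<in> \<AA> \<and> B \<in> \<BB> A}) * real ((k + m) choose k)"
proof -
  let ?I = "{A \<union> B | A B. A \<in> \<AA> \<and> B \<in> \<BB> A}"
  let ?sub = "\<lambda>U. {A. A \<subseteq> U \<and> card A = k}"
  have I: "finite U \<and> card U = k + m" if "U \<in> ?I" for U
    using that \<AA> \<BB> by (auto simp: card_Un_disjoint)
  have "finite (Sigma \<AA> \<BB>)"
    using assms(1,3) by (rule finite_SigmaI)
  moreover have "?I = (\<lambda>(A, B). A \<union> B) ` Sigma \<AA> \<BB>"
    by auto
  ultimately have "finite ?I"
    by simp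
  have "real (card \<AA>) * \<beta> \<le> (\<Sum>A\<in>\<AA>. real (card (\<BB> A)))"
    using \<beta> by (rule sum_bounded_below)
  also have "\<dots> = real (card (Sigma \<AA> \<BB>))"
    using assms(1,3) by simp
  also have "card (Sigma \<AA> \<BB>) \<le> card (Sigma ?I ?sub)"
  proof (rule card_inj_on_le[where f = "\<lambda>(A, B). (A \<union> B, A)"])
    show "inj_on (\<lambda>(A, B). (A \<union> B, A)) (Sigma \<AA> \<BB>)"
    proof (rule inj_onI, clarsimp)
      fix A B B' assume "A \<in> \<AA>" "B \<in> \<BB> A" "B' \<in> \<BB> A" "A \<union> B = A \<union> B'"
      then show "B = B'"
        using \<BB> by blast
    qed
    show "(\<lambda>(A, B). (A \<union> B, A)) ` Sigma \<AA> \<BB> \<subseteq> Sigma ?I ?sub"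
      using \<AA> by force
    show "finite (Sigma ?I ?sub)"
      using \<open>finite ?I\<close> I by (intro finite_SigmaI) auto
  qed
  also have "card (Sigma ?I ?sub) = (\<Sum>U\<in>?I. (k + m) choose k)"
    using \<open>finite ?I\<close> I by (simp add: n_subsets)
  finally show ?thesis
    by simp
qed

lemma mult_power_diff_one_le_half:
  fixes n w \<epsilon> :: real
  assumes "k \<ge> 1" and "2 * w \<le> \<epsilon> * n" and "n \<ge> 0"
  shows "w * n ^ (k - 1) \<le> \<epsilon> / 2 * n ^ k"
proof -
  have "w * n ^ (k - 1) \<le> (\<epsilon> / 2 * n) * n ^ (k - 1)"
    using assms(2,3) by (intro mult_right_mono) auto
  also have "\<dots> = \<epsilon> / 2 * n ^ k"
    using assms(1) by (simp add: power_eq_if)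
  finally show ?thesis .
qed

lemma card_disjoint_unions_ge:
  fixes \<epsilon> :: real
  assumes fin: "finite V" and "k \<ge> 1" and "finite X"
    and \<FF>: "\<FF> \<subseteq> {F. F \<subseteq> V \<and> card F = k}" and \<GG>: "\<GG> \<subseteq> {G. G \<subseteq> V \<and> card G = k}"
    and card_\<FF>: "\<epsilon> * real (card V) ^ k \<le> real (card \<FF>)"
    and card_\<GG>: "\<epsilon> * real (card V) ^ k \<le> real (card \<GG>)"
    and large: "2 * real (card X + k) \<le> \<epsilon> * real (card V)"
  shows "(\<epsilon> / 2 * real (card V) ^ k)\<^sup>2
    \<le> real (card {F \<union> G | F G. F \<in> \<FF> \<and> F \<inter> X = {} \<and> G \<in> \<GG> \<and> G \<inter> (F \<union> X) = {}}) * real ((k + k) choose k)"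
proof -
  define n where "n = card V"
  let ?\<AA> = "{F \<in> \<FF>. F \<inter> X = {}}"
  let ?\<BB> = "\<lambda>F. {G \<in> \<GG>. G \<inter> (F \<union> X) = {}}"
  have avoiding: "\<epsilon> / 2 * real n ^ k \<le> real (card {G \<in> \<HH>. G \<inter> W = {}})"
    if "\<HH> \<subseteq> {G. G \<subseteq> V \<and> card G = k}" "\<epsilon> * real n ^ k \<le> real (card \<HH>)"
      "finite W" "card W \<le> card X + k" for \<HH> W
  proof -
    have "2 * real (card W) \<le> \<epsilon> * real n"
    proof -
      have "real (card W) \<le> real (card X + k)"
        using that(4) by (rule of_nat_mono)
      then have "2 * real (card W) \<le> 2 * real (card X + k)"
        by (rule mult_left_mono) simp
      also have "\<dots> \<le> \<epsilon> * real n"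
        using large unfolding n_def .
      finally show ?thesis .
    qed
    then have "real (card W) * real n ^ (k - 1) \<le> \<epsilon> / 2 * real n ^ k"
      using \<open>k \<ge> 1\<close> by (intro mult_power_diff_one_le_half) auto
    moreover have "real (card \<HH>) - real (card W) * real n ^ (k - 1) \<le> real (card {G \<in> \<HH>. G \<inter> W = {}})"
      unfolding n_def using fin that(1,3) by (rule card_avoiding_ge)
    ultimately show ?thesis
      using that(2) by linarith
  qed
  have finite_\<FF>: "finite \<FF>"
    using finite_subset[OF \<FF>] fin by simp
  have \<FF>_sets: "finite F \<and> card F = k" if "F \<in> \<FF>" for F
    using that \<FF> finite_subset[OF _ fin] by blast
  have \<GG>_sets: "finite G \<and> card G = k" if "G \<in> \<GG>" for G
    using that \<GG> finite_subset[OF _ fin] by blast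
  have card_\<AA>: "\<epsilon> / 2 * real n ^ k \<le> real (card ?\<AA>)"
    by (rule avoiding[OF \<FF> _ \<open>finite X\<close>]) (use card_\<FF> in \<open>simp_all add: n_def\<close>)
  have eq: "{F \<union> G | F G. F \<in> \<FF> \<and> F \<inter> X = {} \<and> G \<in> \<GG> \<and> G \<inter> (F \<union> X) = {}}
      = {F \<union> G | F G. F \<in> ?\<AA> \<and> G \<in> ?\<BB> F}"
    by blast
  have "real (card ?\<AA>) * (\<epsilon> / 2 * real n ^ k)
      \<le> real (card {F \<union> G | F G. F \<in> \<FF> \<and> F \<inter> X = {} \<and> G \<in> \<GG> \<and> G \<inter> (F \<union> X) = {}}) * real ((k + k) choose k)"
    unfolding eq
  proof (rule double_count_disjoint_unions)
    show "finite ?\<AA>"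
      using finite_\<FF> by simp
    show "\<epsilon> / 2 * real n ^ k \<le> real (card (?\<BB> F))" if "F \<in> ?\<AA>" for F
    proof (rule avoiding)
      show "card (F \<union> X) \<le> card X + k"
        using card_Un_le[of F X] \<FF>_sets that by simp
    qed (use \<GG> card_\<GG> \<open>finite X\<close> \<FF>_sets that in \<open>auto simp: n_def\<close>)
    show "finite (?\<BB> F)" for F
      using finite_subset[OF \<GG>] fin by simp
  qed (use \<FF>_sets \<GG>_sets in auto)
  moreover have "(\<epsilon> / 2 * real n ^ k)\<^sup>2 \<le> real (card ?\<AA>) * (\<epsilon> / 2 * real n ^ k)"
  proof -
    have "2 \<le> 2 * real (card X + k)"
      using \<open>k \<ge> 1\<close> by simp
    also have "\<dots> \<le> \<epsilon> * real n"
      using large unfolding n_def .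
    finally have "0 < \<epsilon> * real n"
      by simp
    then have "\<epsilon> > 0"
      by (simp add: zero_less_mult_iff)
    then show ?thesis
      unfolding power2_eq_square using card_\<AA> by (intro mult_right_mono) auto
  qed
  ultimately show ?thesis
    unfolding n_def by linarith
qed

text \<open>For L = [(x, y)] and Z = {x, y} these are exactly the (x, y)-connectors of length c.\<close>
definition joint_connectors :: "'a set \<Rightarrow> 'a set set \<Rightarrow> nat \<Rightarrow> 'a set \<Rightarrow> ('a \<times> 'a) list \<Rightarrow> 'a set set" where
  "joint_connectors VH EH c Z L = {D. D \<subseteq> VH \<and> D \<inter> Z = {} \<and> card D = length L * (4 * c - 1) \<and>
     has_K4m_factor VH EH (D \<union> fst ` set L) \<and> has_K4m_factor VH EH (D \<union> snd ` set L)}"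

definition close_pairing :: "'a set \<Rightarrow> 'a set set \<Rightarrow> nat \<Rightarrow> real \<Rightarrow> ('a \<times> 'a) list \<Rightarrow> bool" where
  "close_pairing VH EH c \<eta> L \<longleftrightarrow>
     distinct (map fst L) \<and> distinct (map snd L) \<and> (\<forall>(p, q)\<in>set L. close VH EH c \<eta> p q)"

lemma close_pairing_Cons:
  "close_pairing VH EH c \<eta> ((p, q) # L) \<longleftrightarrow>
     close VH EH c \<eta> p q \<and> p \<notin> fst ` set L \<and> q \<notin> snd ` set L \<and> close_pairing VH EH c \<eta> L"
  by (auto simp: close_pairing_def)

lemma length_eq_card_fst: "distinct (map fst L) \<Longrightarrow> length L = card (fst ` set L)"
  by (metis distinct_card length_map set_map)

lemma finite_joint_connectors: "finite VH \<Longrightarrow> finite (joint_connectors VH EH c Z L)"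
  by (rule finite_subset[of _ "Pow VH"]) (auto simp: joint_connectors_def)

lemma joint_connectors_Nil:
  assumes "finite VH"
  shows "joint_connectors VH EH c Z [] = {{}}"
proof -
  have "D = {}" if "D \<subseteq> VH" "card D = 0" for D
    using that assms by (meson card_0_eq finite_subset)
  then show ?thesis
    by (auto simp: joint_connectors_def has_K4m_factor_empty)
qed

lemma joint_connectors_Cons:
  assumes "finite VH" and D: "D \<in> joint_connectors VH EH c Z L"
    and C: "connector VH EH c p q C" "C \<inter> (Z \<union> D) = {}"
    and Z: "insert p (fst ` set L) \<subseteq> Z" "insert q (snd ` set L) \<subseteq> Z"
    and "p \<notin> fst ` set L" "q \<notin> snd ` set L"
  shows "D \<union> C \<in> joint_connectors VH EH c Z ((p, q) # L)"
proof -
  have D': "D \<subseteq> VH" "D \<inter> Z = {}" "card D = length L * (4 * c - 1)"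
    "has_K4m_factor VH EH (D \<union> fst ` set L)" "has_K4m_factor VH EH (D \<union> snd ` set L)"
    using D by (auto simp: joint_connectors_def)
  have C': "C \<subseteq> VH" "p \<notin> C" "q \<notin> C" "card C = 4 * c - 1"
    "has_K4m_factor VH EH (insert p C)" "has_K4m_factor VH EH (insert q C)"
    using C by (auto simp: connector_def)
  have "finite D" "finite C"
    using D'(1) C'(1) \<open>finite VH\<close> finite_subset by auto
  moreover have "D \<inter> C = {}"
    using C(2) by blast
  ultimately have "card (D \<union> C) = length ((p, q) # L) * (4 * c - 1)"
    using D'(3) C'(4) by (simp add: card_Un_disjoint)
  moreover have "has_K4m_factor VH EH (D \<union> C \<union> fst ` set ((p, q) # L))"
  proof -
    have "D \<union> C \<union> fst ` set ((p, q) # L) = (D \<union> fst ` set L) \<union> insert p C"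
      by auto
    moreover have "(D \<union> fst ` set L) \<inter> insert p C = {}"
      using D'(2) C(2) Z assms(7) by blast
    ultimately show ?thesis
      using has_K4m_factor_Un[OF D'(4) C'(5)] by simp
  qed
  moreover have "has_K4m_factor VH EH (D \<union> C \<union> snd ` set ((p, q) # L))"
  proof -
    have "D \<union> C \<union> snd ` set ((p, q) # L) = (D \<union> snd ` set L) \<union> insert q C"
      by auto
    moreover have "(D \<union> snd ` set L) \<inter> insert q C = {}"
      using D'(2) C(2) Z assms(8) by blast
    ultimately show ?thesis
      using has_K4m_factor_Un[OF D'(5) C'(6)] by simp
  qed
  ultimately show ?thesis
    using D'(1,2) C'(1) C(2) unfolding joint_connectors_def by blast
qed

lemma card_connectors_avoiding_ge:
  assumes "finite VH" and "c \<ge> 1" and "close VH EH c \<eta> p q" and "finite W"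
    and "2 * real (card W) \<le> \<eta> * real (card VH)"
  shows "\<eta> / 2 * real (card VH) ^ (4 * c - 1) \<le> real (card {C. connector VH EH c p q C \<and> C \<inter> W = {}})"
proof -
  have "real (card {C. connector VH EH c p q C}) - real (card W) * real (card VH) ^ (4 * c - 1 - 1)
      \<le> real (card {C \<in> {C. connector VH EH c p q C}. C \<inter> W = {}})"
    using assms(1,4) by (intro card_avoiding_ge) (auto simp: connector_def)
  moreover have "real (card W) * real (card VH) ^ (4 * c - 1 - 1) \<le> \<eta> / 2 * real (card VH) ^ (4 * c - 1)"
    using assms(2,5) by (intro mult_power_diff_one_le_half) auto
  moreover have "\<eta> * real (card VH) ^ (4 * c - 1) \<le> real (card {C. connector VH EH c p q C})"
    using assms(3) by (simp add: close_def)
  ultimately show ?thesis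
    by simp
qed

lemma card_joint_connectors_Cons_ge:
  fixes \<eta> :: real
  assumes fin: "finite VH" and c: "c \<ge> 1" and "finite Z"
    and pairing: "close_pairing VH EH c \<eta> ((p, q) # L)"
    and Z: "fst ` set ((p, q) # L) \<union> snd ` set ((p, q) # L) \<subseteq> Z"
    and large: "2 * real (card Z + length L * (4 * c - 1)) \<le> \<eta> * real (card VH)"
  shows "real (card (joint_connectors VH EH c Z L)) * (\<eta> / 2 * real (card VH) ^ (4 * c - 1))
    \<le> real (card (joint_connectors VH EH c Z ((p, q) # L)))
      * real ((length L * (4 * c - 1) + (4 * c - 1)) choose (length L * (4 * c - 1)))"
proof -
  define k where "k = 4 * c - 1"
  have pq: "close VH EH c \<eta> p q" "p \<notin> fst ` set L" "q \<notin> snd ` set L"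
    using pairing by (auto simp: close_pairing_Cons)
  have Z': "insert p (fst ` set L) \<subseteq> Z" "insert q (snd ` set L) \<subseteq> Z"
    using Z by auto
  let ?\<AA> = "joint_connectors VH EH c Z L"
  let ?\<BB> = "\<lambda>D. {C. connector VH EH c p q C \<and> C \<inter> (Z \<union> D) = {}}"
  let ?U = "{D \<union> C | D C. D \<in> ?\<AA> \<and> C \<in> ?\<BB> D}"
  have \<AA>: "finite D \<and> card D = length L * k" if "D \<in> ?\<AA>" for D
    using that finite_subset[OF _ fin] by (auto simp: joint_connectors_def k_def)
  have "real (card ?\<AA>) * (\<eta> / 2 * real (card VH) ^ k) \<le> real (card ?U) * real ((length L * k + k) choose (length L * k))"
  proof (rule double_count_disjoint_unions)
    show "finite ?\<AA>"
      using fin by (rule finite_joint_connectors)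
    show "finite (?\<BB> D)" for D
      by (rule finite_subset[of _ "Pow VH"]) (use fin in \<open>auto simp: connector_def\<close>)
    show "finite C \<and> card C = k \<and> D \<inter> C = {}" if "C \<in> ?\<BB> D" for C D
    proof -
      have "C \<subseteq> VH" "card C = k" "C \<inter> (Z \<union> D) = {}"
        using that unfolding connector_def k_def by blast+
      moreover have "finite C"
        using \<open>C \<subseteq> VH\<close> fin by (rule finite_subset)
      ultimately show ?thesis
        by blast
    qed
    show "\<eta> / 2 * real (card VH) ^ k \<le> real (card (?\<BB> D))" if "D \<in> ?\<AA>" for D
    proof -
      have "card (Z \<union> D) \<le> card Z + length L * k"
        using card_Un_le[of Z D] \<AA>[OF that] by simp
      then have "real (card (Z \<union> D)) \<le> real (card Z + length L * k)"
        by (rule of_nat_mono)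
      then have "2 * real (card (Z \<union> D)) \<le> 2 * real (card Z + length L * k)"
        by (rule mult_left_mono) simp
      also have "\<dots> \<le> \<eta> * real (card VH)"
        using large unfolding k_def .
      finally have "2 * real (card (Z \<union> D)) \<le> \<eta> * real (card VH)" .
      moreover have "finite (Z \<union> D)"
        using \<open>finite Z\<close> \<AA>[OF that] by simp
      ultimately show ?thesis
        unfolding k_def by (intro card_connectors_avoiding_ge[OF fin c pq(1)])
    qed
  qed (use \<AA> in auto)
  also have "card ?U \<le> card (joint_connectors VH EH c Z ((p, q) # L))"
  proof (rule card_mono)
    show "finite (joint_connectors VH EH c Z ((p, q) # L))"
      using fin by (rule finite_joint_connectors)
    show "?U \<subseteq> joint_connectors VH EH c Z ((p, q) # L)"
      using joint_connectors_Cons[OF fin _ _ _ Z' pq(2,3)] by blast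
  qed
  then have "real (card ?U) * real ((length L * k + k) choose (length L * k))
      \<le> real (card (joint_connectors VH EH c Z ((p, q) # L))) * real ((length L * k + k) choose (length L * k))"
    by (intro mult_right_mono) auto
  finally show ?thesis
    unfolding k_def .
qed

text \<open>The connectors for the pairs of L are chosen one at a time, each avoiding Z and the
  connectors chosen before; once n is large, this costs at most half of the
  \<eta> n^(4c-1) connectors of the next pair.\<close>
lemma card_joint_connectors_ge:
  fixes \<eta> :: real
  assumes \<eta>: "\<eta> > 0" and c: "c \<ge> 1"
  shows "\<exists>\<kappa>>0. \<exists>N. \<forall>(VH :: 'a set) EH Z L. finite VH \<longrightarrow> N \<le> card VH \<longrightarrow> length L = l \<longrightarrow>
     finite Z \<longrightarrow> card Z \<le> z \<longrightarrow> close_pairing VH EH c \<eta> L \<longrightarrow> fst ` set L \<union> snd ` set L \<subseteq> Z \<longrightarrow>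
     \<kappa> * real (card VH) ^ (l * (4 * c - 1)) \<le> real (card (joint_connectors VH EH c Z L))"
proof (induction l)
  case 0
  show ?case
    by (intro exI[of _ 1] conjI exI[of _ 0]) (auto simp: joint_connectors_Nil)
next
  case (Suc l)
  define k where "k = 4 * c - 1"
  obtain \<kappa> N where "\<kappa> > 0" and IH: "\<And>(VH :: 'a set) EH Z L. finite VH \<Longrightarrow> N \<le> card VH \<Longrightarrow>
      length L = l \<Longrightarrow> finite Z \<Longrightarrow> card Z \<le> z \<Longrightarrow> close_pairing VH EH c \<eta> L \<Longrightarrow>
      fst ` set L \<union> snd ` set L \<subseteq> Z \<Longrightarrow> \<kappa> * real (card VH) ^ (l * k) \<le> real (card (joint_connectors VH EH c Z L))"
    using Suc.IH unfolding k_def by blast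
  define B where "B = real ((l * k + k) choose (l * k))"
  have "B > 0"
    by (simp add: B_def)
  show ?case
  proof (intro exI[of _ "\<kappa> * (\<eta> / 2) / B"] conjI exI[of _ "max N (nat \<lceil>2 * real (z + l * k) / \<eta>\<rceil>)"] allI impI)
    show "\<kappa> * (\<eta> / 2) / B > 0"
      using \<open>\<kappa> > 0\<close> \<eta> \<open>B > 0\<close> by simp
    fix VH :: "'a set" and EH Z L
    assume fin: "finite VH" and n: "max N (nat \<lceil>2 * real (z + l * k) / \<eta>\<rceil>) \<le> card VH"
      and len: "length L = Suc l" and "finite Z" and "card Z \<le> z" and pairing: "close_pairing VH EH c \<eta> L"
      and Z: "fst ` set L \<union> snd ` set L \<subseteq> Z"
    obtain p q L' where L: "L = (p, q) # L'" and len': "length L' = l"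
      using len by (metis length_Suc_conv surj_pair)
    define n where "n = card VH"
    have IH': "\<kappa> * real n ^ (l * k) \<le> real (card (joint_connectors VH EH c Z L'))"
      unfolding n_def using IH[OF fin _ len' \<open>finite Z\<close> \<open>card Z \<le> z\<close>] n pairing Z
      unfolding L by (auto simp: close_pairing_Cons)
    have step: "real (card (joint_connectors VH EH c Z L')) * (\<eta> / 2 * real n ^ k) \<le> real (card (joint_connectors VH EH c Z L)) * B"
    proof -
      have "real (card Z + l * k) \<le> real (z + l * k)"
        using \<open>card Z \<le> z\<close> by simp
      then have "2 * real (card Z + l * k) \<le> 2 * real (z + l * k)"
        by (rule mult_left_mono) simp
      also have "\<dots> \<le> \<eta> * real n"
        using n \<eta> unfolding n_def by (simp add: pos_divide_le_eq mult.commute)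
      finally have "2 * real (card Z + length L' * (4 * c - 1)) \<le> \<eta> * real (card VH)"
        unfolding n_def k_def len' .
      then have "real (card (joint_connectors VH EH c Z L')) * (\<eta> / 2 * real (card VH) ^ (4 * c - 1))
          \<le> real (card (joint_connectors VH EH c Z ((p, q) # L')))
            * real ((length L' * (4 * c - 1) + (4 * c - 1)) choose (length L' * (4 * c - 1)))"
        by (rule card_joint_connectors_Cons_ge[OF fin c \<open>finite Z\<close> pairing[unfolded L] Z[unfolded L]])
      then show ?thesis
        unfolding L n_def B_def k_def len' .
    qed
    have "\<kappa> * (\<eta> / 2) * real n ^ (Suc l * k) = \<kappa> * real n ^ (l * k) * (\<eta> / 2 * real n ^ k)"
      by (simp add: power_add mult_ac)
    also have "\<dots> \<le> real (card (joint_connectors VH EH c Z L')) * (\<eta> / 2 * real n ^ k)"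
      using IH' \<eta> by (intro mult_right_mono) auto
    also note step
    finally have "\<kappa> * (\<eta> / 2) * real n ^ (Suc l * k) \<le> real (card (joint_connectors VH EH c Z L)) * B" .
    then have "\<kappa> * (\<eta> / 2) * real n ^ (Suc l * k) / B \<le> real (card (joint_connectors VH EH c Z L))"
      using \<open>B > 0\<close> by (simp only: pos_divide_le_eq)
    then show "\<kappa> * (\<eta> / 2) / B * real (card VH) ^ (Suc l * (4 * c - 1)) \<le> real (card (joint_connectors VH EH c Z L))"
      unfolding n_def k_def by (simp only: times_divide_eq_left)
  qed
qed

lemma subset_UN_if_sum_card_Int_eq:
  assumes "finite F" and "finite J" and disj: "\<forall>i\<in>J. \<forall>j\<in>J. i \<noteq> j \<longrightarrow> V i \<inter> V j = {}"
    and "(\<Sum>j\<in>J. card (F \<inter> V j)) = card F"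
  shows "F \<subseteq> (\<Union>j\<in>J. V j)"
proof -
  have "card (F \<inter> (\<Union>j\<in>J. V j)) = (\<Sum>j\<in>J. card (F \<inter> V j))"
    unfolding Int_UN_distrib using assms(1,2) disj by (intro card_UN_disjoint) auto
  then have "F \<inter> (\<Union>j\<in>J. V j) = F"
    using assms(1,4) by (intro card_subset_eq) auto
  then show ?thesis
    by blast
qed

lemma part_preserving_bij_exists:
  assumes "finite A" and "finite B" and "A \<subseteq> (\<Union>j\<in>J. V j)" and "B \<subseteq> (\<Union>j\<in>J. V j)"
    and disj: "\<forall>i\<in>J. \<forall>j\<in>J. i \<noteq> j \<longrightarrow> V i \<inter> V j = {}"
    and card_eq: "\<forall>j\<in>J. card (A \<inter> V j) = card (B \<inter> V j)"
  shows "\<exists>h. bij_betw h A B \<and> (\<forall>p\<in>A. \<exists>j\<in>J. p \<in> V j \<and> h p \<in> V j)"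
proof -
  have "\<forall>j\<in>J. \<exists>g. bij_betw g (A \<inter> V j) (B \<inter> V j)"
    using card_eq assms(1,2) by (auto intro: finite_same_card_bij)
  then obtain f where f: "\<And>j. j \<in> J \<Longrightarrow> bij_betw (f j) (A \<inter> V j) (B \<inter> V j)"
    by metis
  define part where "part p = (THE j. j \<in> J \<and> p \<in> V j)" for p
  have part: "part p = j" if "j \<in> J" "p \<in> V j" for p j
    unfolding part_def using that disj by blast
  define h where "h p = f (part p) p" for p
  have "disjoint_family_on (\<lambda>j. B \<inter> V j) J"
    using disj by (auto simp: disjoint_family_on_def)
  moreover have "bij_betw h (A \<inter> V j) (B \<inter> V j)" if "j \<in> J" for j
    using f[OF that] part[OF that] by (subst bij_betw_cong[where g = "f j"]) (auto simp: h_def)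
  ultimately have "bij_betw h (\<Union>j\<in>J. A \<inter> V j) (\<Union>j\<in>J. B \<inter> V j)"
    by (rule bij_betw_UNION_disjoint)
  moreover have "(\<Union>j\<in>J. A \<inter> V j) = A" "(\<Union>j\<in>J. B \<inter> V j) = B"
    using assms(3,4) by auto
  moreover have "\<forall>p\<in>A. \<exists>j\<in>J. p \<in> V j \<and> h p \<in> V j"
    using f part assms(3) unfolding h_def by (fastforce dest: bij_betwE)
  ultimately show ?thesis
    by auto
qed

lemma card_Diff_singleton_Int_part:
  assumes "finite F" and "u \<in> F" and "u \<in> V i" and "i \<in> J" and "k \<in> J"
    and disj: "\<forall>i\<in>J. \<forall>j\<in>J. i \<noteq> j \<longrightarrow> V i \<inter> V j = {}"
  shows "card ((F - {u}) \<inter> V k) = card (F \<inter> V k) - (if k = i then 1 else 0)"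
proof (cases "k = i")
  case True
  then have "(F - {u}) \<inter> V k = (F \<inter> V k) - {u}"
    by blast
  then show ?thesis
    using True assms(1-3) by simp
next
  case False
  then have "(F - {u}) \<inter> V k = F \<inter> V k"
    using assms(3-6) by blast
  then show ?thesis
    using False by simp
qed

text \<open>Pair x with a vertex u of F in its part and y with a vertex w of G in its part; the
  remaining vertices F - {u} and G - {w} meet every part equally often and are matched inside
  the parts.  Every pair then lies in a common closed part.\<close>
lemma close_pairing_exists:
  assumes disj: "\<forall>i\<in>J. \<forall>j\<in>J. i \<noteq> j \<longrightarrow> V i \<inter> V j = {}"
    and closed: "\<forall>j\<in>J. closed VH EH c \<eta> (V j)"
    and "i \<in> J" "j \<in> J" "x \<in> V i" "y \<in> V j"
    and "finite F" "finite G" "F \<subseteq> (\<Union>j\<in>J. V j)" "G \<subseteq> (\<Union>j\<in>J. V j)"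
    and "F \<inter> G = {}" "x \<notin> F \<union> G" "y \<notin> F \<union> G"
    and "F \<inter> V i \<noteq> {}" "G \<inter> V j \<noteq> {}"
    and balanced: "\<forall>k\<in>J. card (F \<inter> V k) - (if k = i then 1 else 0) = card (G \<inter> V k) - (if k = j then 1 else 0)"
  shows "\<exists>L. fst ` set L = insert x G \<and> snd ` set L = insert y F \<and> close_pairing VH EH c \<eta> L"
proof -
  obtain u w where u: "u \<in> F" "u \<in> V i" and w: "w \<in> G" "w \<in> V j"
    using assms(14,15) by blast
  have "card ((F - {u}) \<inter> V k) = card ((G - {w}) \<inter> V k)" if "k \<in> J" for k
  proof -
    have "card ((F - {u}) \<inter> V k) = card (F \<inter> V k) - (if k = i then 1 else 0)"
      using u disj \<open>i \<in> J\<close> that \<open>finite F\<close> by (intro card_Diff_singleton_Int_part)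
    moreover have "card ((G - {w}) \<inter> V k) = card (G \<inter> V k) - (if k = j then 1 else 0)"
      using w disj \<open>j \<in> J\<close> that \<open>finite G\<close> by (intro card_Diff_singleton_Int_part)
    ultimately show ?thesis
      using balanced that by simp
  qed
  then obtain h where h: "bij_betw h (F - {u}) (G - {w})" "\<forall>p\<in>F - {u}. \<exists>k\<in>J. p \<in> V k \<and> h p \<in> V k"
    using part_preserving_bij_exists[of "F - {u}" "G - {w}" V J] assms(7-10) disj by blast
  obtain xs where xs: "set xs = F - {u}" "distinct xs"
    using \<open>finite F\<close> finite_distinct_list by (metis finite_Diff)
  define L where "L = (x, u) # (w, y) # map (\<lambda>p. (h p, p)) xs"
  have close: "close VH EH c \<eta> p q" if "k \<in> J" "p \<in> V k" "q \<in> V k" "p \<noteq> q" for k p q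
    using closed that unfolding closed_def by blast
  have "fst ` set L = insert x (insert w (h ` (F - {u})))" "snd ` set L = insert u (insert y (F - {u}))"
    unfolding L_def using xs by (auto simp: image_image)
  moreover have "h ` (F - {u}) = G - {w}"
    using h(1) by (rule bij_betw_imp_surj_on)
  moreover have "distinct (map h xs)"
    using xs h(1) by (simp add: distinct_map bij_betw_def)
  moreover have "\<forall>p\<in>F - {u}. close VH EH c \<eta> (h p) p"
  proof
    fix p assume p: "p \<in> F - {u}"
    obtain k where k: "k \<in> J" "p \<in> V k" "h p \<in> V k"
      using h(2) p by blast
    have "h p \<in> G"
      using bij_betwE[OF h(1)] p by blast
    then have "h p \<noteq> p"
      using p \<open>F \<inter> G = {}\<close> by auto
    with k show "close VH EH c \<eta> (h p) p"
      by (intro close)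
  qed
  ultimately show ?thesis
    using u w xs assms(3-6,11-13) close[of i x u] close[of j w y]
    by (intro exI[of _ L]) (auto simp: L_def close_pairing_def comp_def)
qed

lemma connector_of_linked_copies:
  assumes "c \<ge> 1" and F: "K4m_copy VH EH F" and G: "K4m_copy VH EH G" and "F \<inter> G = {}"
    and "x \<notin> F \<union> G" and "y \<notin> F \<union> G"
    and L: "fst ` set L = insert x G" "snd ` set L = insert y F" "distinct (map fst L)"
    and D: "D \<in> joint_connectors VH EH c (F \<union> G \<union> {x, y}) L"
  shows "connector VH EH (5 * c + 1) x y (F \<union> G \<union> D)"
proof -
  note F' = K4m_copy_D[OF F] and G' = K4m_copy_D[OF G]
  have "length L = 5"
    using L \<open>x \<notin> F \<union> G\<close> G' by (simp add: length_eq_card_fst)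
  then have D': "D \<subseteq> VH" "D \<inter> (F \<union> G \<union> {x, y}) = {}" "card D = 5 * (4 * c - 1)"
    "has_K4m_factor VH EH (D \<union> insert x G)" "has_K4m_factor VH EH (D \<union> insert y F)"
    using D L by (auto simp: joint_connectors_def)
  have "finite D"
    using D'(3) \<open>c \<ge> 1\<close> by (intro card_ge_0_finite) simp
  have "card (F \<union> G \<union> D) = 4 * (5 * c + 1) - 1"
    using F' G' D'(2,3) \<open>finite D\<close> \<open>F \<inter> G = {}\<close> \<open>c \<ge> 1\<close>
    by (subst card_Un_disjoint; auto simp: card_Un_disjoint)
  moreover have "has_K4m_factor VH EH (insert x (F \<union> G \<union> D))"
  proof -
    have "insert x (F \<union> G \<union> D) = F \<union> (D \<union> insert x G)"
      by blast
    moreover have "F \<inter> (D \<union> insert x G) = {}"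
      using D'(2) \<open>F \<inter> G = {}\<close> \<open>x \<notin> F \<union> G\<close> by blast
    ultimately show ?thesis
      using has_K4m_factor_Un[OF has_K4m_factor_copy[OF F] D'(4)] by simp
  qed
  moreover have "has_K4m_factor VH EH (insert y (F \<union> G \<union> D))"
  proof -
    have "insert y (F \<union> G \<union> D) = G \<union> (D \<union> insert y F)"
      by blast
    moreover have "G \<inter> (D \<union> insert y F) = {}"
      using D'(2) \<open>F \<inter> G = {}\<close> \<open>y \<notin> F \<union> G\<close> by blast
    ultimately show ?thesis
      using has_K4m_factor_Un[OF has_K4m_factor_copy[OF G] D'(5)] by simp
  qed
  ultimately show ?thesis
    using F' G' D'(1,2) \<open>x \<notin> F \<union> G\<close> \<open>y \<notin> F \<union> G\<close> unfolding connector_def by blast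
qed

lemma card_connector_completions_ge:
  fixes \<kappa> :: real
  assumes fin: "finite VH" and c: "c \<ge> 1"
    and joint: "\<And>Z L. finite Z \<Longrightarrow> card Z \<le> 10 \<Longrightarrow> length L = 5 \<Longrightarrow> close_pairing VH EH c \<eta> L \<Longrightarrow>
        fst ` set L \<union> snd ` set L \<subseteq> Z \<Longrightarrow>
        \<kappa> * real (card VH) ^ (5 * (4 * c - 1)) \<le> real (card (joint_connectors VH EH c Z L))"
    and F: "K4m_copy VH EH F" and G: "K4m_copy VH EH G"
    and "F \<inter> {x, y} = {}" and "G \<inter> (F \<union> {x, y}) = {}"
    and L: "fst ` set L = insert x G" "snd ` set L = insert y F" "close_pairing VH EH c \<eta> L"
  shows "\<kappa> * real (card VH) ^ (5 * (4 * c - 1)) \<le> real (card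
    {D. D \<inter> (F \<union> G) = {} \<and> card D = 5 * (4 * c - 1) \<and> connector VH EH (5 * c + 1) x y (F \<union> G \<union> D)})"
proof -
  note F' = K4m_copy_D[OF F] and G' = K4m_copy_D[OF G]
  have "F \<inter> G = {}" "x \<notin> F \<union> G" "y \<notin> F \<union> G"
    using assms(6,7) by auto
  have "length L = 5"
    using L G' \<open>x \<notin> F \<union> G\<close> by (simp add: length_eq_card_fst close_pairing_def)
  moreover have "card (F \<union> G \<union> {x, y}) \<le> 10"
  proof -
    have "card {x, y} \<le> 2"
      by (simp add: card_insert_if)
    then show ?thesis
      using card_Un_le[of "F \<union> G" "{x, y}"] card_Un_le[of F G] F' G' by simp
  qed
  ultimately have "\<kappa> * real (card VH) ^ (5 * (4 * c - 1)) \<le> real (card (joint_connectors VH EH c (F \<union> G \<union> {x, y}) L))"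
    using L F' G' by (intro joint) auto
  also have "card (joint_connectors VH EH c (F \<union> G \<union> {x, y}) L)
      \<le> card {D. D \<inter> (F \<union> G) = {} \<and> card D = 5 * (4 * c - 1) \<and> connector VH EH (5 * c + 1) x y (F \<union> G \<union> D)}"
  proof (rule card_mono)
    show "finite {D. D \<inter> (F \<union> G) = {} \<and> card D = 5 * (4 * c - 1) \<and> connector VH EH (5 * c + 1) x y (F \<union> G \<union> D)}"
      by (rule finite_subset[of _ "Pow VH"]) (use fin in \<open>auto simp: connector_def\<close>)
    show "joint_connectors VH EH c (F \<union> G \<union> {x, y}) L
        \<subseteq> {D. D \<inter> (F \<union> G) = {} \<and> card D = 5 * (4 * c - 1) \<and> connector VH EH (5 * c + 1) x y (F \<union> G \<union> D)}"
    proof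
      fix D assume D: "D \<in> joint_connectors VH EH c (F \<union> G \<union> {x, y}) L"
      then have "connector VH EH (5 * c + 1) x y (F \<union> G \<union> D)"
        using c F G \<open>F \<inter> G = {}\<close> \<open>x \<notin> F \<union> G\<close> \<open>y \<notin> F \<union> G\<close> L
        by (intro connector_of_linked_copies) (auto simp: close_pairing_def)
      then show "D \<in> {D. D \<inter> (F \<union> G) = {} \<and> card D = 5 * (4 * c - 1) \<and> connector VH EH (5 * c + 1) x y (F \<union> G \<union> D)}"
        using D \<open>length L = 5\<close> by (auto simp: joint_connectors_def)
    qed
  qed
  finally show ?thesis
    by simp
qed

text \<open>Every connector S built from a pair (F, G) and a completion D is counted at most
  (20c+3 choose 8) times, once for each 8-subset of S that could be F \<union> G.\<close>
lemma card_connectors_ge_of_linkable_copies: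
  fixes \<kappa> :: real and \<FF> \<GG> :: "'a set set"
  assumes fin: "finite VH" and c: "c \<ge> 1"
    and joint: "\<And>Z L. finite Z \<Longrightarrow> card Z \<le> 10 \<Longrightarrow> length L = 5 \<Longrightarrow> close_pairing VH EH c \<eta> L \<Longrightarrow>
        fst ` set L \<union> snd ` set L \<subseteq> Z \<Longrightarrow>
        \<kappa> * real (card VH) ^ (5 * (4 * c - 1)) \<le> real (card (joint_connectors VH EH c Z L))"
    and \<FF>: "\<And>F. F \<in> \<FF> \<Longrightarrow> K4m_copy VH EH F" and \<GG>: "\<And>G. G \<in> \<GG> \<Longrightarrow> K4m_copy VH EH G"
    and link: "\<And>F G. F \<in> \<FF> \<Longrightarrow> G \<in> \<GG> \<Longrightarrow> F \<inter> G = {} \<Longrightarrow> x \<notin> F \<union> G \<Longrightarrow> y \<notin> F \<union> G \<Longrightarrow>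
        \<exists>L. fst ` set L = insert x G \<and> snd ` set L = insert y F \<and> close_pairing VH EH c \<eta> L"
  shows "real (card {F \<union> G | F G. F \<in> \<FF> \<and> F \<inter> {x, y} = {} \<and> G \<in> \<GG> \<and> G \<inter> (F \<union> {x, y}) = {}})
      * (\<kappa> * real (card VH) ^ (5 * (4 * c - 1)))
    \<le> real (card {S. connector VH EH (5 * c + 1) x y S}) * real ((20 * c + 3) choose 8)"
proof -
  let ?\<EE> = "{F \<union> G | F G. F \<in> \<FF> \<and> F \<inter> {x, y} = {} \<and> G \<in> \<GG> \<and> G \<inter> (F \<union> {x, y}) = {}}"
  let ?\<DD> = "\<lambda>E. {D. D \<inter> E = {} \<and> card D = 5 * (4 * c - 1) \<and> connector VH EH (5 * c + 1) x y (E \<union> D)}"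
  let ?S = "{S. connector VH EH (5 * c + 1) x y S}"
  have \<EE>: "finite E \<and> card E = 8 \<and> E \<subseteq> VH" if E: "E \<in> ?\<EE>" for E
  proof -
    obtain F G where "E = F \<union> G" "F \<in> \<FF>" "G \<in> \<GG>" "F \<inter> G = {}"
      using E by blast
    then show ?thesis
      using K4m_copy_D[OF \<FF>[of F]] K4m_copy_D[OF \<GG>[of G]] by (simp add: card_Un_disjoint)
  qed
  have "real (card ?\<EE>) * (\<kappa> * real (card VH) ^ (5 * (4 * c - 1)))
      \<le> real (card {E \<union> D | E D. E \<in> ?\<EE> \<and> D \<in> ?\<DD> E}) * real ((8 + 5 * (4 * c - 1)) choose 8)"
  proof (rule double_count_disjoint_unions)
    show "finite ?\<EE>"
      by (rule finite_subset[of _ "Pow VH"]) (use fin \<EE> in auto)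
    show "finite E \<and> card E = 8" if "E \<in> ?\<EE>" for E
      using \<EE>[OF that] by blast
    show "finite (?\<DD> E)" for E
      by (rule finite_subset[of _ "Pow VH"]) (use fin in \<open>auto simp: connector_def\<close>)
    show "finite D \<and> card D = 5 * (4 * c - 1) \<and> E \<inter> D = {}" if "D \<in> ?\<DD> E" for D E
      using that c by (auto intro: card_ge_0_finite)
    show "\<kappa> * real (card VH) ^ (5 * (4 * c - 1)) \<le> real (card (?\<DD> E))" if E: "E \<in> ?\<EE>" for E
    proof -
      obtain F G where "E = F \<union> G" "F \<in> \<FF>" "G \<in> \<GG>" "F \<inter> {x, y} = {}" "G \<inter> (F \<union> {x, y}) = {}"
        using E by blast
      moreover from this obtain L where "fst ` set L = insert x G" "snd ` set L = insert y F"
        "close_pairing VH EH c \<eta> L"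
        using link by blast
      ultimately show ?thesis
        using card_connector_completions_ge[OF fin c joint \<FF> \<GG>] by blast
    qed
  qed
  also have "card {E \<union> D | E D. E \<in> ?\<EE> \<and> D \<in> ?\<DD> E} \<le> card ?S"
  proof (rule card_mono)
    show "finite ?S"
      by (rule finite_subset[of _ "Pow VH"]) (use fin in \<open>auto simp: connector_def\<close>)
  qed blast
  then have "real (card {E \<union> D | E D. E \<in> ?\<EE> \<and> D \<in> ?\<DD> E}) * real ((8 + 5 * (4 * c - 1)) choose 8)
      \<le> real (card ?S) * real ((8 + 5 * (4 * c - 1)) choose 8)"
    by (intro mult_right_mono) auto
  also have "8 + 5 * (4 * c - 1) = 20 * c + 3"
    using c by simp
  finally show ?thesis .
qed

lemma close_of_linkable_copies:
  fixes \<epsilon> \<kappa> :: real and \<FF> \<GG> :: "'a set set"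
  assumes fin: "finite VH" and c: "c \<ge> 1" and \<epsilon>: "\<epsilon> > 0" and \<kappa>: "\<kappa> > 0"
    and n_ge: "12 / \<epsilon> \<le> real (card VH)"
    and joint: "\<And>Z L. finite Z \<Longrightarrow> card Z \<le> 10 \<Longrightarrow> length L = 5 \<Longrightarrow> close_pairing VH EH c \<eta> L \<Longrightarrow>
        fst ` set L \<union> snd ` set L \<subseteq> Z \<Longrightarrow>
        \<kappa> * real (card VH) ^ (5 * (4 * c - 1)) \<le> real (card (joint_connectors VH EH c Z L))"
    and \<FF>: "\<And>F. F \<in> \<FF> \<Longrightarrow> K4m_copy VH EH F" and \<GG>: "\<And>G. G \<in> \<GG> \<Longrightarrow> K4m_copy VH EH G"
    and card_\<FF>: "\<epsilon> * real (card VH) ^ 4 \<le> real (card \<FF>)"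
    and card_\<GG>: "\<epsilon> * real (card VH) ^ 4 \<le> real (card \<GG>)"
    and link: "\<And>F G. F \<in> \<FF> \<Longrightarrow> G \<in> \<GG> \<Longrightarrow> F \<inter> G = {} \<Longrightarrow> x \<notin> F \<union> G \<Longrightarrow> y \<notin> F \<union> G \<Longrightarrow>
        \<exists>L. fst ` set L = insert x G \<and> snd ` set L = insert y F \<and> close_pairing VH EH c \<eta> L"
  shows "close VH EH (5 * c + 1) ((\<epsilon> / 2)\<^sup>2 / real (8 choose 4) * \<kappa> / real ((20 * c + 3) choose 8)) x y"
proof -
  define n where "n = card VH"
  define k where "k = 4 * c - 1"
  define C1 where "C1 = real (8 choose 4)"
  define C2 where "C2 = real ((20 * c + 3) choose 8)"
  let ?\<EE> = "{F \<union> G | F G. F \<in> \<FF> \<and> F \<inter> {x, y} = {} \<and> G \<in> \<GG> \<and> G \<inter> (F \<union> {x, y}) = {}}"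
  let ?S = "{S. connector VH EH (5 * c + 1) x y S}"
  have card_\<EE>: "(\<epsilon> / 2 * real n ^ 4)\<^sup>2 \<le> real (card ?\<EE>) * C1"
  proof -
    have "2 * real (card {x, y} + 4) \<le> 12"
      by (simp add: card_insert_if)
    also have "12 \<le> \<epsilon> * real n"
      using n_ge \<epsilon> unfolding n_def by (simp add: pos_divide_le_eq mult.commute)
    finally have "2 * real (card {x, y} + 4) \<le> \<epsilon> * real n" .
    moreover have "\<FF> \<subseteq> {F. F \<subseteq> VH \<and> card F = 4}" "\<GG> \<subseteq> {G. G \<subseteq> VH \<and> card G = 4}"
      using \<FF> \<GG> by (auto dest: K4m_copy_D)
    ultimately have "(\<epsilon> / 2 * real n ^ 4)\<^sup>2 \<le> real (card ?\<EE>) * real ((4 + 4) choose 4)"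
      unfolding n_def using card_\<FF> card_\<GG> by (intro card_disjoint_unions_ge[OF fin]) auto
    then show ?thesis
      by (simp add: C1_def)
  qed
  have counted: "real (card ?\<EE>) * (\<kappa> * real n ^ (5 * k)) \<le> real (card ?S) * C2"
    unfolding n_def k_def C2_def using card_connectors_ge_of_linkable_copies[OF fin c joint \<FF> \<GG> link] .
  have "C1 > 0" "C2 > 0"
    using c by (simp_all add: C1_def C2_def)
  have exponent: "8 + 5 * k = 20 * c + 3" "4 * (5 * c + 1) - 1 = 20 * c + 3"
    using c unfolding k_def by auto
  have "(\<epsilon> / 2)\<^sup>2 * \<kappa> * real n ^ (20 * c + 3) = (\<epsilon> / 2 * real n ^ 4)\<^sup>2 * (\<kappa> * real n ^ (5 * k))"
    unfolding exponent(1)[symmetric] by (simp add: power_add power_mult_distrib power2_eq_square mult_ac)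
  also have "\<dots> \<le> (real (card ?\<EE>) * C1) * (\<kappa> * real n ^ (5 * k))"
    using card_\<EE> \<kappa> by (intro mult_right_mono) auto
  also have "\<dots> = C1 * (real (card ?\<EE>) * (\<kappa> * real n ^ (5 * k)))"
    by (simp add: mult_ac)
  also have "\<dots> \<le> C1 * (real (card ?S) * C2)"
    using counted \<open>C1 > 0\<close> by (intro mult_left_mono) auto
  finally have "(\<epsilon> / 2)\<^sup>2 / C1 * \<kappa> / C2 * real n ^ (20 * c + 3) \<le> real (card ?S)"
    using \<open>C1 > 0\<close> \<open>C2 > 0\<close> by (simp add: field_simps)
  then show ?thesis
    unfolding close_def exponent(2) C1_def C2_def n_def .
qed

definition profile_copies :: "'a set \<Rightarrow> 'a set set \<Rightarrow> (nat \<Rightarrow> 'a set) \<Rightarrow> nat set \<Rightarrow> (nat \<Rightarrow> nat) \<Rightarrow> 'a set set" where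
  "profile_copies VH EH V J \<alpha> = {F. K4m_copy VH EH F \<and> (\<forall>k\<in>J. card (F \<inter> V k) = \<alpha> k)}"

lemma close_of_dense_profiles:
  fixes V :: "nat \<Rightarrow> 'a set" and \<alpha> \<beta> :: "nat \<Rightarrow> nat" and \<epsilon> \<kappa> :: real
  assumes fin: "finite VH" and c: "c \<ge> 1" and \<epsilon>: "\<epsilon> > 0" and \<kappa>: "\<kappa> > 0"
    and n_ge: "12 / \<epsilon> \<le> real (card VH)"
    and joint: "\<And>Z L. finite Z \<Longrightarrow> card Z \<le> 10 \<Longrightarrow> length L = 5 \<Longrightarrow> close_pairing VH EH c \<eta> L \<Longrightarrow>
        fst ` set L \<union> snd ` set L \<subseteq> Z \<Longrightarrow>
        \<kappa> * real (card VH) ^ (5 * (4 * c - 1)) \<le> real (card (joint_connectors VH EH c Z L))"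
    and "finite J" and disj: "\<forall>i\<in>J. \<forall>j\<in>J. i \<noteq> j \<longrightarrow> V i \<inter> V j = {}"
    and closed: "\<forall>j\<in>J. closed VH EH c \<eta> (V j)"
    and ij: "i \<in> J" "j \<in> J" "x \<in> V i" "y \<in> V j"
    and sums: "(\<Sum>k\<in>J. \<alpha> k) = 4" "(\<Sum>k\<in>J. \<beta> k) = 4" and "\<alpha> i \<ge> 1" "\<beta> j \<ge> 1"
    and balanced: "\<forall>k\<in>J. \<alpha> k - (if k = i then 1 else 0) = \<beta> k - (if k = j then 1 else 0)"
    and dense: "\<epsilon> * real (card VH) ^ 4 \<le> real (card (profile_copies VH EH V J \<alpha>))"
      "\<epsilon> * real (card VH) ^ 4 \<le> real (card (profile_copies VH EH V J \<beta>))"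
  shows "close VH EH (5 * c + 1) ((\<epsilon> / 2)\<^sup>2 / real (8 choose 4) * \<kappa> / real ((20 * c + 3) choose 8)) x y"
proof (rule close_of_linkable_copies[OF fin c \<epsilon> \<kappa> n_ge joint _ _ dense])
  have covered: "finite F \<and> F \<subseteq> (\<Union>k\<in>J. V k)" if "F \<in> profile_copies VH EH V J \<gamma>" "(\<Sum>k\<in>J. \<gamma> k) = 4" for F \<gamma>
  proof -
    have "finite F" "card F = 4" "\<forall>k\<in>J. card (F \<inter> V k) = \<gamma> k"
      using that(1) K4m_copy_D by (auto simp: profile_copies_def)
    moreover from this have "(\<Sum>k\<in>J. card (F \<inter> V k)) = card F"
      using that(2) by simp
    ultimately show ?thesis
      using subset_UN_if_sum_card_Int_eq[OF _ \<open>finite J\<close> disj, of F] by simp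
  qed
  fix F G assume F: "F \<in> profile_copies VH EH V J \<alpha>" and G: "G \<in> profile_copies VH EH V J \<beta>"
    and "F \<inter> G = {}" "x \<notin> F \<union> G" "y \<notin> F \<union> G"
  have "\<forall>k\<in>J. card (F \<inter> V k) = \<alpha> k" "\<forall>k\<in>J. card (G \<inter> V k) = \<beta> k"
    using F G by (auto simp: profile_copies_def)
  moreover from this have "card (F \<inter> V i) \<noteq> 0" "card (G \<inter> V j) \<noteq> 0"
    using ij \<open>\<alpha> i \<ge> 1\<close> \<open>\<beta> j \<ge> 1\<close> by auto
  then have "F \<inter> V i \<noteq> {}" "G \<inter> V j \<noteq> {}"
    by auto
  ultimately show "\<exists>L. fst ` set L = insert x G \<and> snd ` set L = insert y F \<and> close_pairing VH EH c \<eta> L"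
    using covered[OF F sums(1)] covered[OF G sums(2)] balanced \<open>F \<inter> G = {}\<close> \<open>x \<notin> F \<union> G\<close> \<open>y \<notin> F \<union> G\<close>
    by (intro close_pairing_exists[OF disj closed ij]) auto
qed (auto simp: profile_copies_def)

text \<open>Both profiles a and a - e_1 + e_2 become a - e_1 once one vertex is removed from V 1
  resp. V 2; this is what makes any two of them balanced.\<close>
lemma closed_Un_of_dense_profiles:
  fixes Vs :: "nat \<Rightarrow> 'a set" and a :: "nat \<Rightarrow> nat" and \<epsilon> \<kappa> :: real
  assumes fin: "finite VH" and c: "c \<ge> 1" and \<epsilon>: "\<epsilon> > 0" and \<kappa>: "\<kappa> > 0"
    and n_ge: "12 / \<epsilon> \<le> real (card VH)"
    and joint: "\<And>Z L. finite Z \<Longrightarrow> card Z \<le> 10 \<Longrightarrow> length L = 5 \<Longrightarrow> close_pairing VH EH c \<eta> L \<Longrightarrow>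
        fst ` set L \<union> snd ` set L \<subseteq> Z \<Longrightarrow>
        \<kappa> * real (card VH) ^ (5 * (4 * c - 1)) \<le> real (card (joint_connectors VH EH c Z L))"
    and d: "2 \<le> d" and closed: "\<forall>i\<in>{1..d}. closed VH EH c \<eta> (Vs i)"
    and disj: "\<forall>i\<in>{1..d}. \<forall>j\<in>{1..d}. i \<noteq> j \<longrightarrow> Vs i \<inter> Vs j = {}"
    and a1: "a 1 \<ge> 1" and sum_a: "(\<Sum>i=1..d. a i) = 4"
    and dense: "\<epsilon> * real (card VH) ^ 4
      \<le> real (card {F. K4m_copy VH EH F \<and> (\<forall>i\<in>{1..d}. card (F \<inter> Vs i) = a i)})"
    and dense': "\<epsilon> * real (card VH) ^ 4
      \<le> real (card {F. K4m_copy VH EH F \<and> card (F \<inter> Vs 1) = a 1 - 1 \<and> card (F \<inter> Vs 2) = a 2 + 1 \<and>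
                   (\<forall>j\<in>{3..d}. card (F \<inter> Vs j) = a j)})"
  shows "closed VH EH (5 * c + 1) ((\<epsilon> / 2)\<^sup>2 / real (8 choose 4) * \<kappa> / real ((20 * c + 3) choose 8))
    (Vs 1 \<union> Vs 2)"
proof -
  define b where "b i = (if i = 1 then a else a(1 := a 1 - 1, 2 := a 2 + 1))" for i :: nat
  have parts: "{1..d} = insert 1 (insert 2 {3..d})"
    using d by auto
  have "profile_copies VH EH Vs {1..d} (b 2) = {F. K4m_copy VH EH F \<and> card (F \<inter> Vs 1) = a 1 - 1 \<and>
      card (F \<inter> Vs 2) = a 2 + 1 \<and> (\<forall>j\<in>{3..d}. card (F \<inter> Vs j) = a j)}"
    unfolding profile_copies_def b_def parts by auto
  then have dense_b: "\<epsilon> * real (card VH) ^ 4 \<le> real (card (profile_copies VH EH Vs {1..d} (b i)))"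
    if "i \<in> {1, 2}" for i
    using that dense dense' by (auto simp: profile_copies_def b_def)
  have sum_b: "(\<Sum>k=1..d. b i k) = 4" if "i \<in> {1, 2}" for i
    using that a1 sum_a unfolding parts by (auto simp: b_def)
  have balanced: "\<forall>k\<in>{1..d}. b i k - (if k = i then 1 else 0) = b j k - (if k = j then 1 else 0)"
    if "i \<in> {1, 2}" "j \<in> {1, 2}" for i j
    using that a1 by (auto simp: b_def)
  have b_pos: "b i i \<ge> 1" if "i \<in> {1, 2}" for i
    using that a1 by (auto simp: b_def)
  show ?thesis
    unfolding closed_def
  proof (intro ballI impI)
    fix x y assume "x \<in> Vs 1 \<union> Vs 2" "y \<in> Vs 1 \<union> Vs 2"
    then obtain i j where ij: "i \<in> {1, 2}" "j \<in> {1, 2}" "x \<in> Vs i" "y \<in> Vs j"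
      by blast
    then have "i \<in> {1..d}" "j \<in> {1..d}"
      using d by auto
    then show "close VH EH (5 * c + 1) ((\<epsilon> / 2)\<^sup>2 / real (8 choose 4) * \<kappa> / real ((20 * c + 3) choose 8)) x y"
      by (intro close_of_dense_profiles[OF fin c \<epsilon> \<kappa> n_ge joint _ disj closed _ _ ij(3,4)
          sum_b[OF ij(1)] sum_b[OF ij(2)] b_pos[OF ij(1)] b_pos[OF ij(2)] balanced[OF ij(1,2)]
          dense_b[OF ij(1)] dense_b[OF ij(2)]]) simp_all
  qed
qed

theorem lemma5p4:
  fixes \<eta> \<epsilon> :: real and c :: nat
  assumes "\<eta> > 0" and "\<epsilon> > 0" and "c \<ge> 1"
  shows "\<exists>\<eta>'>0. \<exists>n0::nat. \<forall>n\<ge>n0. \<forall>(VH :: nat set) EH (Vs :: nat \<Rightarrow> nat set) (d :: nat) (a :: nat \<Rightarrow> nat).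
     three_graph VH EH \<and> card VH = n \<and>
     2 \<le> d \<and> d \<le> 4 \<and>
     (\<forall>i\<in>{1..d}. Vs i \<subseteq> VH \<and> closed VH EH c \<eta> (Vs i)) \<and>
     (\<forall>i\<in>{1..d}. \<forall>j\<in>{1..d}. i \<noteq> j \<longrightarrow> Vs i \<inter> Vs j = {}) \<and>
     a 1 \<ge> 1 \<and> (\<Sum>i=1..d. a i) = 4 \<and>
     real (card {F. K4m_copy VH EH F \<and> (\<forall>i\<in>{1..d}. card (F \<inter> Vs i) = a i)}) \<ge> \<epsilon> * real n ^ 4 \<and>
     real (card {F. K4m_copy VH EH F \<and> card (F \<inter> Vs 1) = a 1 - 1 \<and> card (F \<inter> Vs 2) = a 2 + 1 \<and>
                     (\<forall>j\<in>{3..d}. card (F \<inter> Vs j) = a j)}) \<ge> \<epsilon> * real n ^ 4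
     \<longrightarrow> closed VH EH (5 * c + 1) \<eta>' (Vs 1 \<union> Vs 2)"
proof -
  obtain \<kappa> N where \<kappa>: "\<kappa> > 0" and joint: "\<forall>(VH :: nat set) EH Z L. finite VH \<longrightarrow> N \<le> card VH \<longrightarrow>
      length L = 5 \<longrightarrow> finite Z \<longrightarrow> card Z \<le> 10 \<longrightarrow> close_pairing VH EH c \<eta> L \<longrightarrow>
      fst ` set L \<union> snd ` set L \<subseteq> Z \<longrightarrow>
      \<kappa> * real (card VH) ^ (5 * (4 * c - 1)) \<le> real (card (joint_connectors VH EH c Z L))"
    using card_joint_connectors_ge[OF assms(1,3), where 'a = nat and l = 5 and z = 10] by (elim exE conjE) (rule that)
  let ?\<eta>' = "(\<epsilon> / 2)\<^sup>2 / real (8 choose 4) * \<kappa> / real ((20 * c + 3) choose 8)"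
  have main: "closed VH EH (5 * c + 1) ?\<eta>' (Vs 1 \<union> Vs 2)"
    if "max N (nat \<lceil>12 / \<epsilon>\<rceil>) \<le> n" and "three_graph VH EH" and "card VH = n" and "2 \<le> d"
      and "\<forall>i\<in>{1..d}. Vs i \<subseteq> VH \<and> closed VH EH c \<eta> (Vs i)"
      and "\<forall>i\<in>{1..d}. \<forall>j\<in>{1..d}. i \<noteq> j \<longrightarrow> Vs i \<inter> Vs j = {}"
      and "a 1 \<ge> 1" and "(\<Sum>i=1..d. a i) = 4"
      and "real (card {F. K4m_copy VH EH F \<and> (\<forall>i\<in>{1..d}. card (F \<inter> Vs i) = a i)}) \<ge> \<epsilon> * real n ^ 4"
      and "real (card {F. K4m_copy VH EH F \<and> card (F \<inter> Vs 1) = a 1 - 1 \<and> card (F \<inter> Vs 2) = a 2 + 1 \<and>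
             (\<forall>j\<in>{3..d}. card (F \<inter> Vs j) = a j)}) \<ge> \<epsilon> * real n ^ 4"
    for n d and VH :: "nat set" and EH and Vs :: "nat \<Rightarrow> nat set" and a :: "nat \<Rightarrow> nat"
  proof (rule closed_Un_of_dense_profiles[OF _ assms(3,2) \<kappa>])
    show "finite VH"
      using \<open>three_graph VH EH\<close> by (simp add: three_graph_def)
    then show "\<kappa> * real (card VH) ^ (5 * (4 * c - 1)) \<le> real (card (joint_connectors VH EH c Z L))"
      if "finite Z" "card Z \<le> 10" "length L = 5" "close_pairing VH EH c \<eta> L" "fst ` set L \<union> snd ` set L \<subseteq> Z"
      for Z L
      using joint that \<open>max N _ \<le> n\<close> \<open>card VH = n\<close> by auto
  qed (use that in auto)
  show ?thesis
  proof (intro exI[of _ ?\<eta>'] conjI exI[of _ "max N (nat \<lceil>12 / \<epsilon>\<rceil>)"] allI impI)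
    have "0 < (20 * c + 3) choose 8"
      using assms(3) by (simp add: zero_less_binomial)
    then show "?\<eta>' > 0"
      using assms(2) \<kappa> by (intro divide_pos_pos mult_pos_pos) simp_all
  qed (elim conjE, rule main, assumption+)
qed

end
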